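(* Let $\mathcal{C}$ be a cyclic code of length $n$ over $\mathbb{F}_q$ with $\gcd(n,q)=1$, let $m$ be the multiplicative order of $q$ modulo $n$, and let $\alpha\in\mathbb{F}_{q^m}$ be a primitive $n$-th root of unity. Let $n_1$ be a positive divisor of $n$, put $\nu=n/n_1$ and $\beta=\alpha^{\nu}$. For $0\le i\le \nu-1$ let $\mathcal{I}_i=\{i,i+\nu,i+2\nu,\ldots,i+n-\nu\}$ and let $\mathcal{C}_{\mathcal{I}_i}=\{(c_i,c_{i+\nu},\ldots,c_{i+n-\nu}) : (c_0,\ldots,c_{n-1})\in\mathcal{C}\}$ be the code punctured to $\mathcal{I}_i$ (a cyclic code of length $n_1$). Then $$\mathcal{S}(\mathcal{C}_{\mathcal{I}_i})=\big\{\lambda \bmod n_1 : \{\lambda,\lambda+n_1,\ldots,\lambda+(\nu-1)n_1\}\subseteq \mathcal{S}(\mathcal{C})\big\},$$ i.e. for $\lambda\in\{0,\ldots,n_1-1\}$ we have $\lambda\in\mathcal{S}(\mathcal{C}_{\mathcal{I}_i})$ if and only if $\lambda+jn_1\in\mathcal{S}(\mathcal{C})$ for all $j=0,1,\ldots,\nu-1$.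
   Context: For a cyclic code $\mathcal{C}$ of length $n$ over $\mathbb{F}_q$ with $\gcd(n,q)=1$ and a primitive $n$-th root of unity $\alpha$, identify a codeword $\underline{c}=(c_0,\ldots,c_{n-1})$ with $c(x)=\sum_{i=0}^{n-1}c_ix^i$. The set of zeros of $\mathcal{C}$ is $\mathcal{S}(\mathcal{C})=\{j\in\{0,\ldots,n-1\} : c(\alpha^j)=0 \text{ for all } \underline{c}\in\mathcal{C}\}$. For the length-$n_1$ punctured code, zeros are computed with respect to $\beta=\alpha^{n/n_1}$: $\mathcal{S}(\mathcal{C}_{\mathcal{I}_i})=\{\lambda\in\{0,\ldots,n_1-1\}: \sum_{t=0}^{n_1-1}a_t\beta^{\lambda t}=0 \text{ for all } (a_0,\ldots,a_{n_1-1})\in \mathcal{C}_{\mathcal{I}_i}\}$. *)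

theory Defs
  imports "HOL-Number_Theory.Number_Theory"
begin

definition is_subfield :: "'b::field set \<Rightarrow> bool" where
  "is_subfield K \<longleftrightarrow> 0 \<in> K \<and> 1 \<in> K \<and>
     (\<forall>x\<in>K. \<forall>y\<in>K. x + y \<in> K \<and> x * y \<in> K) \<and>
     (\<forall>x\<in>K. - x \<in> K) \<and> (\<forall>x\<in>K. x \<noteq> 0 \<longrightarrow> inverse x \<in> K)"

definition cyclic_code :: "'b::field set \<Rightarrow> nat \<Rightarrow> 'b list set \<Rightarrow> bool" where
  "cyclic_code K n C \<longleftrightarrow>
     (\<forall>c\<in>C. length c = n \<and> set c \<subseteq> K) \<and>
     replicate n 0 \<in> C \<and>
     (\<forall>c\<in>C. \<forall>d\<in>C. map2 (+) c d \<in> C) \<and>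
     (\<forall>a\<in>K. \<forall>c\<in>C. map (\<lambda>x. a * x) c \<in> C) \<and>
     (\<forall>c\<in>C. rotate (n - 1) c \<in> C)"
  (* rotate (n-1) c = (c_{n-1}, c_0, ..., c_{n-2}), the cyclic right shift *)

definition primitive_root_of_unity :: "nat \<Rightarrow> 'b::field \<Rightarrow> bool" where
  "primitive_root_of_unity n a \<longleftrightarrow> a ^ n = 1 \<and> (\<forall>k. 0 < k \<and> k < n \<longrightarrow> a ^ k \<noteq> 1)"

definition zeros :: "nat \<Rightarrow> 'b::field \<Rightarrow> 'b list set \<Rightarrow> nat set" where
  "zeros n a C = {j. j < n \<and> (\<forall>c\<in>C. (\<Sum>t<n. c ! t * a ^ (j * t)) = 0)}"

definition punctured :: "nat \<Rightarrow> nat \<Rightarrow> nat \<Rightarrow> 'b list set \<Rightarrow> 'b list set" where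
  "punctured nu n1 i C = (\<lambda>c. map (\<lambda>t. c ! (i + t * nu)) [0..<n1]) ` C"

end

theory Submission
  imports Defs
begin

text \<open>
  Write \<open>n = n1 * \<nu>\<close>, let \<open>\<zeta> = \<alpha> ^ n1\<close>, a primitive \<open>\<nu>\<close>-th root of unity, and let
  \<open>dft c j\<close> be the discrete Fourier transform of a word \<open>c\<close>. Orthogonality of the powers
  of \<open>\<zeta>\<close> filters the residue class \<open>i\<close> modulo \<open>\<nu>\<close> out of a codeword:
  \<open>\<Sum>s<\<nu>. \<zeta> ^ (- i * s) * dft c (\<lambda> + s * n1) = \<nu> * \<alpha> ^ (\<lambda> * i) * dft a \<lambda>\<close>, where \<open>a\<close>
  is \<open>c\<close> punctured to \<open>I\<^sub>i\<close>. So the punctured code vanishes at \<open>\<lambda>\<close> when \<open>C\<close> vanishes at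
  every \<open>\<lambda> + s * n1\<close>. Conversely, a cyclic shift of \<open>c\<close> by \<open>r\<close> multiplies
  \<open>dft c (\<lambda> + s * n1)\<close> by \<open>\<alpha> ^ (\<lambda> * r) * \<zeta> ^ (s * r)\<close>. Vanishing of the punctured code on
  all shifts of \<open>c\<close> therefore says that the length-\<open>\<nu>\<close> Fourier transform of
  \<open>s \<mapsto> \<zeta> ^ (- i * s) * dft c (\<lambda> + s * n1)\<close> vanishes, which forces every term to vanish
  because \<open>\<nu> \<noteq> 0\<close> in a characteristic coprime to \<open>n\<close>.
\<close>

definition dft :: "nat \<Rightarrow> 'a::comm_semiring_1 \<Rightarrow> 'a list \<Rightarrow> nat \<Rightarrow> 'a" where
  "dft n a c j = (\<Sum>t<n. c ! t * a ^ (j * t))"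

definition decimate :: "nat \<Rightarrow> nat \<Rightarrow> nat \<Rightarrow> 'a list \<Rightarrow> 'a list" where
  "decimate \<nu> n1 i c = map (\<lambda>t. c ! (i + t * \<nu>)) [0..<n1]"

lemma zeros_eq_dft: "zeros n a C = {j. j < n \<and> (\<forall>c\<in>C. dft n a c j = 0)}"
  by (simp add: zeros_def dft_def)

lemma punctured_eq_image_decimate: "punctured \<nu> n1 i C = decimate \<nu> n1 i ` C"
  by (simp add: punctured_def decimate_def)

lemma dft_decimate: "dft n1 a (decimate \<nu> n1 i c) j = (\<Sum>t<n1. c ! (i + t * \<nu>) * a ^ (j * t))"
  by (simp add: dft_def decimate_def)

lemma power_eq_power_mod:
  fixes a :: "'a::monoid_mult"
  assumes "a ^ n = 1" shows "a ^ k = a ^ (k mod n)"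
proof -
  have "a ^ k = (a ^ n) ^ (k div n) * a ^ (k mod n)"
    by (metis div_mult_mod_eq mult.commute power_add power_mult)
  then show ?thesis using assms by simp
qed

lemma primitive_root_of_unity_nonzero:
  "primitive_root_of_unity n (a::'a::field) \<Longrightarrow> 0 < n \<Longrightarrow> a \<noteq> 0"
  by (auto simp: primitive_root_of_unity_def zero_power)

lemma primitive_root_of_unity_power_eq_1_iff:
  fixes a :: "'a::field"
  assumes prim: "primitive_root_of_unity n a" and "0 < n"
  shows "a ^ k = 1 \<longleftrightarrow> n dvd k"
proof
  assume "a ^ k = 1"
  then have "a ^ (k mod n) = 1"
    using prim power_eq_power_mod[of a n k] by (simp add: primitive_root_of_unity_def)
  then have "k mod n = 0"
    using prim \<open>0 < n\<close> unfolding primitive_root_of_unity_def by (meson mod_less_divisor neq0_conv)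
  then show "n dvd k" by auto
next
  assume "n dvd k"
  then show "a ^ k = 1"
    using prim by (auto simp: power_mult primitive_root_of_unity_def)
qed

lemma primitive_root_of_unity_power:
  fixes a :: "'a::field"
  assumes prim: "primitive_root_of_unity (m * n) a" and "0 < m"
  shows "primitive_root_of_unity n (a ^ m)"
  using assms unfolding primitive_root_of_unity_def power_mult[symmetric] by simp

lemma sum_powers_primitive_root_of_unity:
  fixes \<zeta> :: "'a::field"
  assumes prim: "primitive_root_of_unity n \<zeta>" and "0 < n"
  shows "(\<Sum>r<n. (\<zeta> ^ d) ^ r) = (if n dvd d then of_nat n else 0)"
proof -
  have "(\<zeta> ^ d) ^ n = (\<zeta> ^ n) ^ d"
    by (simp add: power_mult[symmetric] mult.commute)
  then have "(\<zeta> ^ d) ^ n = 1"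
    using prim by (simp add: primitive_root_of_unity_def)
  moreover have "\<zeta> ^ d = 1 \<longleftrightarrow> n dvd d"
    using primitive_root_of_unity_power_eq_1_iff[OF assms] .
  ultimately show ?thesis by (simp add: sum_gp_strict)
qed

lemma dvd_diff_add_iff_mod_eq:
  fixes \<nu> :: nat assumes "i < \<nu>"
  shows "\<nu> dvd \<nu> - i + t \<longleftrightarrow> t mod \<nu> = i"
proof -
  have "\<nu> - i + t = (t + \<nu>) - i" using assms by simp
  then show ?thesis
    using assms mod_eq_dvd_iff_nat[of i "t + \<nu>" \<nu>] by simp
qed

lemma sum_residue_class:
  fixes f :: "nat \<Rightarrow> 'a::comm_monoid_add" assumes "i < \<nu>"
  shows "(\<Sum>t<n1 * \<nu>. if t mod \<nu> = i then f t else 0) = (\<Sum>u<n1. f (i + u * \<nu>))"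
proof -
  let ?g = "\<lambda>t. if t mod \<nu> = i then f t else 0"
  have "(\<Sum>t\<in>{u * \<nu>..<u * \<nu> + \<nu>}. ?g t) = (\<Sum>v<\<nu>. ?g (v + u * \<nu>))" for u
    using sum.shift_bounds_nat_ivl[of ?g 0 "u * \<nu>" \<nu>] by (simp add: lessThan_atLeast0 add.commute)
  then have "(\<Sum>t<n1 * \<nu>. ?g t) = (\<Sum>u<n1. \<Sum>v<\<nu>. ?g (v + u * \<nu>))"
    using sum.nat_group[of ?g \<nu> n1] by simp
  also have "\<dots> = (\<Sum>u<n1. f (i + u * \<nu>))"
    using assms by (simp add: if_distrib cong: if_cong)
  finally show ?thesis .
qed

lemma dft_coeff_eq_0_if_dft_vanishes:
  fixes \<zeta> :: "'a::field"
  assumes prim: "primitive_root_of_unity \<nu> \<zeta>" and "of_nat \<nu> \<noteq> (0::'a)"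
    and vanish: "\<forall>r<\<nu>. (\<Sum>s<\<nu>. x s * (\<zeta> ^ s) ^ r) = 0" and "j < \<nu>"
  shows "x j = 0"
proof -
  have "0 = (\<Sum>r<\<nu>. (\<zeta> ^ (\<nu> - j)) ^ r * (\<Sum>s<\<nu>. x s * (\<zeta> ^ s) ^ r))"
    using vanish by simp
  also have "\<dots> = (\<Sum>r<\<nu>. \<Sum>s<\<nu>. x s * (\<zeta> ^ (\<nu> - j + s)) ^ r)"
    by (simp add: sum_distrib_left power_add power_mult_distrib mult_ac)
  also have "\<dots> = (\<Sum>s<\<nu>. x s * (\<Sum>r<\<nu>. (\<zeta> ^ (\<nu> - j + s)) ^ r))"
    by (subst sum.swap) (simp add: sum_distrib_left)
  also have "\<dots> = (\<Sum>s<\<nu>. if s = j then of_nat \<nu> * x s else 0)"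
  proof (intro sum.cong refl)
    fix s assume "s \<in> {..<\<nu>}"
    then have "\<nu> dvd \<nu> - j + s \<longleftrightarrow> s = j"
      using dvd_diff_add_iff_mod_eq[OF \<open>j < \<nu>\<close>] by simp
    then show "x s * (\<Sum>r<\<nu>. (\<zeta> ^ (\<nu> - j + s)) ^ r) = (if s = j then of_nat \<nu> * x s else 0)"
      using sum_powers_primitive_root_of_unity[OF prim, of "\<nu> - j + s"] \<open>j < \<nu>\<close> by simp
  qed
  also have "\<dots> = of_nat \<nu> * x j"
    using \<open>j < \<nu>\<close> by simp
  finally show ?thesis
    using assms(2) by simp
qed

lemma of_nat_card_subfield_eq_0:
  fixes K :: "'a::field set"
  assumes "is_subfield K" and "finite K"
  shows "of_nat (card K) = (0::'a)"
proof -
  have "y + 1 \<in> K" and "y - 1 \<in> K" if "y \<in> K" for y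
    using assms(1) that unfolding is_subfield_def diff_conv_add_uminus by blast+
  then have "bij_betw (\<lambda>y. y + 1) K K"
    by (intro bij_betwI[where g = "\<lambda>y. y - 1"]) auto
  then have "(\<Sum>y\<in>K. y) = (\<Sum>y\<in>K. y + 1)"
    using sum.reindex_bij_betw[of "\<lambda>y. y + 1" K K "\<lambda>y. y"] by simp
  also have "\<dots> = (\<Sum>y\<in>K. y) + of_nat (card K)"
    by (simp add: sum.distrib)
  finally show ?thesis
    by simp
qed

lemma of_nat_ne_0_if_coprime_card_subfield:
  fixes K :: "'a::field set"
  assumes "is_subfield K" and "finite K" and "coprime n (card K)"
  shows "of_nat n \<noteq> (0::'a)"
proof
  assume "of_nat n = (0::'a)"
  then have "CHAR('a) dvd n" and "CHAR('a) dvd card K"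
    using of_nat_card_subfield_eq_0[OF assms(1,2)] by (simp_all add: of_nat_eq_0_iff_char_dvd)
  then have "CHAR('a) = 1"
    using assms(3) coprime_common_divisor_nat by blast
  then show False
    by simp
qed

lemma cong_square_pred_1: "0 < (n::nat) \<Longrightarrow> [(n - 1) * (n - 1) = 1] (mod n)"
proof -
  assume "0 < n"
  then obtain m where n: "n = Suc m"
    using gr0_implies_Suc by blast
  have "[int m = - 1] (mod int n)"
    using n by (simp add: cong_iff_dvd_diff add.commute)
  then have "[int m * int m = (- 1) * (- 1)] (mod int n)"
    using cong_mult by blast
  then show ?thesis
    using n by (simp flip: cong_int_iff)
qed

lemma cyclic_code_rotate_closed:
  assumes code: "cyclic_code K n C" and "c \<in> C"
  shows "rotate k c \<in> C"
proof -
  have shift: "\<And>x. x \<in> C \<Longrightarrow> rotate (n - 1) x \<in> C" and len: "length c = n"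
    using assms unfolding cyclic_code_def by auto
  have iter: "rotate (r * (n - 1)) c \<in> C" for r
  proof (induction r)
    case (Suc r)
    then show ?case
      using shift[of "rotate (r * (n - 1)) c"] by (simp add: rotate_rotate add.commute)
  qed (use \<open>c \<in> C\<close> in simp)
  show ?thesis
  proof (cases "n = 0")
    case True
    then show ?thesis using len \<open>c \<in> C\<close> by simp
  next
    case False
    \<comment> \<open>\<open>n - 1\<close> is its own inverse modulo \<open>n\<close>, so \<open>k (n - 1)\<close> right shifts amount to \<open>k\<close> left shifts\<close>
    then have "[k * (n - 1) * (n - 1) = k * 1] (mod n)"
      using cong_scalar_left[OF cong_square_pred_1[of n]] by (simp add: mult.assoc)
    then have "rotate k c = rotate (k * (n - 1) * (n - 1)) c"
      using rotate_conv_mod len by (metis cong_def mult.right_neutral)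
    then show ?thesis
      using iter[of "k * (n - 1)"] by simp
  qed
qed

lemma dft_rotate:
  fixes a :: "'a::comm_semiring_1"
  assumes "a ^ n = 1" and "length c = n" and "0 < n"
  shows "dft n a c j = a ^ (j * k) * dft n a (rotate k c) j"
proof -
  let ?\<sigma> = "\<lambda>t. (k + t) mod n"
  have "inj_on ?\<sigma> {..<n}"
  proof
    fix x y assume "x \<in> {..<n}" "y \<in> {..<n}" "?\<sigma> x = ?\<sigma> y"
    then have "[x = y] (mod n)"
      by (simp flip: cong_def add: cong_add_lcancel_nat)
    with \<open>x \<in> {..<n}\<close> \<open>y \<in> {..<n}\<close> show "x = y"
      by (simp add: cong_def)
  qed
  then have \<sigma>: "bij_betw ?\<sigma> {..<n} {..<n}"
    using \<open>0 < n\<close> by (simp add: bij_betw_def endo_inj_surj image_subsetI)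
  have aj: "(a ^ j) ^ n = 1"
    using assms(1) by (metis power_mult mult.commute power_one)
  have "a ^ (j * k) * dft n a (rotate k c) j = (\<Sum>t<n. c ! ?\<sigma> t * (a ^ j) ^ (k + t))"
    unfolding dft_def sum_distrib_left using assms(2)
    by (intro sum.cong refl) (simp add: nth_rotate power_add mult_ac flip: power_mult)
  also have "\<dots> = (\<Sum>t<n. c ! ?\<sigma> t * (a ^ j) ^ ?\<sigma> t)"
    using power_eq_power_mod[OF aj, of "k + t" for t] by simp
  also have "\<dots> = dft n a c j"
    unfolding dft_def using sum.reindex_bij_betw[OF \<sigma>, of "\<lambda>u. c ! u * (a ^ j) ^ u"]
    by (simp add: power_mult)
  finally show ?thesis ..
qed

lemma dft_decimation:
  fixes \<alpha> :: "'a::field"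
  assumes prim: "primitive_root_of_unity (n1 * \<nu>) \<alpha>" and "0 < n1" and "i < \<nu>"
  shows "(\<Sum>s<\<nu>. ((\<alpha> ^ n1) ^ (\<nu> - i)) ^ s * dft (n1 * \<nu>) \<alpha> c (l + s * n1))
       = of_nat \<nu> * \<alpha> ^ (l * i) * dft n1 (\<alpha> ^ \<nu>) (decimate \<nu> n1 i c) l"
proof -
  have root: "primitive_root_of_unity \<nu> (\<alpha> ^ n1)"
    using primitive_root_of_unity_power[OF prim \<open>0 < n1\<close>] .
  have exponents: "((\<alpha> ^ n1) ^ (\<nu> - i)) ^ s * \<alpha> ^ ((l + s * n1) * t)
      = \<alpha> ^ (l * t) * ((\<alpha> ^ n1) ^ (\<nu> - i + t)) ^ s" for s t
    by (simp add: power_add[symmetric] power_mult[symmetric] algebra_simps)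
  have "(\<Sum>s<\<nu>. ((\<alpha> ^ n1) ^ (\<nu> - i)) ^ s * dft (n1 * \<nu>) \<alpha> c (l + s * n1))
      = (\<Sum>t<n1 * \<nu>. c ! t * \<alpha> ^ (l * t) * (\<Sum>s<\<nu>. ((\<alpha> ^ n1) ^ (\<nu> - i + t)) ^ s))"
    unfolding dft_def sum_distrib_left
    by (subst sum.swap) (simp add: exponents mult.left_commute mult.assoc)
  also have "\<dots> = (\<Sum>t<n1 * \<nu>. if t mod \<nu> = i then of_nat \<nu> * (c ! t * \<alpha> ^ (l * t)) else 0)"
    using sum_powers_primitive_root_of_unity[OF root] dvd_diff_add_iff_mod_eq[OF \<open>i < \<nu>\<close>] \<open>i < \<nu>\<close>
    by (intro sum.cong refl) auto
  also have "\<dots> = (\<Sum>u<n1. of_nat \<nu> * (c ! (i + u * \<nu>) * \<alpha> ^ (l * (i + u * \<nu>))))"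
    by (rule sum_residue_class[OF \<open>i < \<nu>\<close>])
  also have "\<dots> = of_nat \<nu> * \<alpha> ^ (l * i) * dft n1 (\<alpha> ^ \<nu>) (decimate \<nu> n1 i c) l"
    by (simp add: dft_decimate sum_distrib_left power_add power_mult[symmetric] algebra_simps)
  finally show ?thesis .
qed

lemma decimate_dft_eq_0_iff:
  fixes \<alpha> :: "'a::field" and C :: "'a list set"
  assumes prim: "primitive_root_of_unity (n1 * \<nu>) \<alpha>" and "0 < n1" and "i < \<nu>"
    and "of_nat \<nu> \<noteq> (0::'a)"
    and len: "\<And>c. c \<in> C \<Longrightarrow> length c = n1 * \<nu>"
    and rot: "\<And>c k. c \<in> C \<Longrightarrow> rotate k c \<in> C"
  shows "(\<forall>c\<in>C. dft n1 (\<alpha> ^ \<nu>) (decimate \<nu> n1 i c) l = 0)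
     \<longleftrightarrow> (\<forall>j<\<nu>. \<forall>c\<in>C. dft (n1 * \<nu>) \<alpha> c (l + j * n1) = 0)"
proof -
  let ?n = "n1 * \<nu>" and ?\<zeta> = "\<alpha> ^ n1"
  \<comment> \<open>\<open>?\<zeta> ^ (\<nu> - i)\<close> stands for \<open>?\<zeta> ^ (- i)\<close>\<close>
  define x where "x c s = (?\<zeta> ^ (\<nu> - i)) ^ s * dft ?n \<alpha> c (l + s * n1)" for c s
  have "0 < ?n"
    using \<open>0 < n1\<close> \<open>i < \<nu>\<close> by simp
  then have "\<alpha> \<noteq> 0"
    using primitive_root_of_unity_nonzero[OF prim] by simp
  have \<alpha>: "\<alpha> ^ ?n = 1"
    using prim by (simp add: primitive_root_of_unity_def)
  have decimation: "dft n1 (\<alpha> ^ \<nu>) (decimate \<nu> n1 i c) l = 0 \<longleftrightarrow> (\<Sum>s<\<nu>. x c s) = 0" for c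
    using dft_decimation[OF prim \<open>0 < n1\<close> \<open>i < \<nu>\<close>, of c l] assms(4) \<open>\<alpha> \<noteq> 0\<close> by (simp add: x_def)
  have shifted: "(\<Sum>s<\<nu>. x c s * (?\<zeta> ^ s) ^ r) = 0"
    if "c \<in> C" and "r < \<nu>" and zero: "\<forall>c\<in>C. (\<Sum>s<\<nu>. x c s) = 0" for c r
  proof -
    let ?d = "rotate (?n - r) c"
    have "r \<le> ?n"
      using mult_le_mono1[of 1 n1 \<nu>] \<open>r < \<nu>\<close> \<open>0 < n1\<close> by linarith
    then have "rotate r ?d = c"
      using len[OF \<open>c \<in> C\<close>] by (simp add: rotate_rotate)
    then have "dft ?n \<alpha> ?d j = \<alpha> ^ (j * r) * dft ?n \<alpha> c j" for j
      using dft_rotate[OF \<alpha> len[OF rot[OF \<open>c \<in> C\<close>, of "?n - r"]] \<open>0 < ?n\<close>, of j r] by simp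
    then have "x ?d s = \<alpha> ^ (l * r) * (x c s * (?\<zeta> ^ s) ^ r)" for s
      by (simp add: x_def algebra_simps power_add flip: power_mult)
    then have "\<alpha> ^ (l * r) * (\<Sum>s<\<nu>. x c s * (?\<zeta> ^ s) ^ r) = (\<Sum>s<\<nu>. x ?d s)"
      by (simp add: sum_distrib_left)
    also have "\<dots> = 0"
      using zero rot[OF \<open>c \<in> C\<close>] by blast
    finally have "\<alpha> ^ (l * r) * (\<Sum>s<\<nu>. x c s * (?\<zeta> ^ s) ^ r) = 0" .
    then show ?thesis
      using \<open>\<alpha> \<noteq> 0\<close> by simp
  qed
  show ?thesis
  proof
    assume "\<forall>c\<in>C. dft n1 (\<alpha> ^ \<nu>) (decimate \<nu> n1 i c) l = 0"
    then have zero: "\<forall>c\<in>C. (\<Sum>s<\<nu>. x c s) = 0"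
      using decimation by blast
    have "x c j = 0" if "c \<in> C" and "j < \<nu>" for c j
      using dft_coeff_eq_0_if_dft_vanishes[OF primitive_root_of_unity_power[OF prim \<open>0 < n1\<close>] assms(4)]
        shifted[OF \<open>c \<in> C\<close> _ zero] \<open>j < \<nu>\<close> by blast
    then show "\<forall>j<\<nu>. \<forall>c\<in>C. dft ?n \<alpha> c (l + j * n1) = 0"
      using \<open>\<alpha> \<noteq> 0\<close> by (simp add: x_def)
  next
    assume "\<forall>j<\<nu>. \<forall>c\<in>C. dft ?n \<alpha> c (l + j * n1) = 0"
    then show "\<forall>c\<in>C. dft n1 (\<alpha> ^ \<nu>) (decimate \<nu> n1 i c) l = 0"
      using decimation by (simp add: x_def)
  qed
qed

theorem lemma2:
  fixes K :: "'b::{field,finite} set" and q n m n1 \<nu> i :: nat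
    and \<alpha> \<beta> :: 'b and C :: "'b list set"
  assumes "is_subfield K" and "card K = q"
    and "0 < n" and "coprime n q"
    and "m = ord n q" and "card (UNIV :: 'b set) = q ^ m"
    and "cyclic_code K n C"
    and "primitive_root_of_unity n \<alpha>"
    and "0 < n1" and "n1 dvd n" and "\<nu> = n div n1" and "\<beta> = \<alpha> ^ \<nu>"
    and "i < \<nu>"
  shows "\<forall>l<n1. l \<in> zeros n1 \<beta> (punctured \<nu> n1 i C) \<longleftrightarrow>
                 (\<forall>j<\<nu>. l + j * n1 \<in> zeros n \<alpha> C)"
proof -
  have n: "n = n1 * \<nu>"
    using assms(10,11) by simp
  have "of_nat n \<noteq> (0::'b)"
    using of_nat_ne_0_if_coprime_card_subfield[OF assms(1) finite] assms(2,4) by simp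
  then have "of_nat \<nu> \<noteq> (0::'b)"
    using n by simp
  moreover have "\<And>c. c \<in> C \<Longrightarrow> length c = n1 * \<nu>"
    using assms(7) n by (simp add: cyclic_code_def)
  moreover have "l + j * n1 < n" if "l < n1" and "j < \<nu>" for l j
  proof -
    have "l + j * n1 < Suc j * n1"
      using \<open>l < n1\<close> by simp
    also have "\<dots> \<le> n"
      using mult_le_mono1[of "Suc j" \<nu> n1] \<open>j < \<nu>\<close> n by (simp add: mult.commute)
    finally show ?thesis .
  qed
  ultimately show ?thesis
    using decimate_dft_eq_0_iff[OF assms(8)[unfolded n] assms(9,13)]
      cyclic_code_rotate_closed[OF assms(7)]
    unfolding zeros_eq_dft punctured_eq_image_decimate assms(12) n by auto
qed

end
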